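(* Let $q\in\mathbb{C}^\times$ be not a root of unity, $\varphi\in\mathbb{C}[x]^{\langle0\rangle}$, and let $v_0$ be a highest weight vector of the $U_q(\mathfrak{sl}_2^{\langle0\rangle}[x])$-module $L(\mathbf{u}^{\langle0\rangle}(\varphi))$. Then, as formal power series in $w$, $$\Psi^+(w)\cdot v_0=\beta_\varphi q^{\deg\varphi}\frac{\varphi^\flat(q^{-2}w)}{\varphi^\flat(w)}v_0.$$
   Context: $[k]=(q^k-q^{-k})/(q-q^{-1})$, $[x,y]=xy-yx$. $U_q(\mathfrak{sl}_2^{\langle0\rangle}[x])$ is the $\mathbb{C}$-algebra with generators $X^\pm_t,J_t$ ($t\ge0$), $K^\pm$ and relations: $K^+$ and all $J_t$ pairwise commute; $K^+K^-=1=K^-K^+$; $(K^-)^2=1-(q-q^{-1})J_0$; $X^\pm_{t+1}X^\pm_s-q^{\pm2}X^\pm_sX^\pm_{t+1}=q^{\pm2}X^\pm_tX^\pm_{s+1}-X^\pm_{s+1}X^\pm_t$; $K^+X^\pm_tK^-=q^{\pm2}X^\pm_t$; $q^{\pm2}J_0X^\pm_t-q^{\mp2}X^\pm_tJ_0=\pm[2]X^\pm_t$; $[J_{s+1},X^\pm_t]=q^{\pm2}J_sX^\pm_{t+1}-q^{\mp2}X^\pm_{t+1}J_s$; $[X^+_t,X^-_s]=K^+J_{s+t}$. $\Psi^+_0=K^+$, $\Psi^+_t=(q-q^{-1})K^+J_t$ ($t>0$), $\Psi^+(w)=\sum_{t\ge0}\Psi^+_tw^t$. $L(\mathbf{u})$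 for $\mathbf{u}=(\lambda,(u_t)_{t>0})$ is the simple module generated by $v_0$ with $X^+_tv_0=0$, $K^+v_0=\lambda v_0$, $J_tv_0=u_tv_0$ ($t>0$). $p_t(q)(x_1,\dots,x_k)=\sum_{\lambda\vdash t,\ell(\lambda)\le k}q^{-\ell(\lambda)}(q-q^{-1})^{\ell(\lambda)-1}m_\lambda(x_1,\dots,x_k)$. $\mathbb{C}[x]^{\langle0\rangle}$ is the set of $\varphi=\beta_\varphi(x-\gamma_1)\cdots(x-\gamma_k)$ with $\beta_\varphi=\pm1$; $\mathbf{u}^{\langle0\rangle}(\varphi)=(\beta_\varphi,(0)_{t>0})$ if $k=0$, $(\beta_\varphi q^k,(p_t(q)(\gamma_1,\dots,\gamma_k))_{t>0})$ if $k>0$. $\varphi^\flat(w)=(1-\gamma_1w)\cdots(1-\gamma_kw)$. *)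

theory Defs
  imports "HOL-Computational_Algebra.Formal_Power_Series" "HOL-Computational_Algebra.Polynomial" "HOL-Library.Multiset"
begin

definition qint :: "complex \<Rightarrow> nat \<Rightarrow> complex" where
  "qint q k = (q ^ k - inverse q ^ k) / (q - inverse q)"

(* A representation of U_q(sl_2^<0>[x]) on the complex vector space ('v, s):
   the generators X^+_t, X^-_t, J_t, K^+, K^- act by linear maps Xp t, Xm t, J t, Kp, Km
   satisfying the defining relations (stated pointwise on vectors). *)
definition uq_rep ::
  "complex \<Rightarrow> (complex \<Rightarrow> 'v::ab_group_add \<Rightarrow> 'v) \<Rightarrow> (nat \<Rightarrow> 'v \<Rightarrow> 'v) \<Rightarrow> (nat \<Rightarrow> 'v \<Rightarrow> 'v)
     \<Rightarrow> (nat \<Rightarrow> 'v \<Rightarrow> 'v) \<Rightarrow> ('v \<Rightarrow> 'v) \<Rightarrow> ('v \<Rightarrow> 'v) \<Rightarrow> bool" where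
  "uq_rep q s Xp Xm J Kp Km \<longleftrightarrow>
     vector_space s \<and>
     (\<forall>t. Vector_Spaces.linear s s (Xp t) \<and> Vector_Spaces.linear s s (Xm t)
          \<and> Vector_Spaces.linear s s (J t)) \<and>
     Vector_Spaces.linear s s Kp \<and> Vector_Spaces.linear s s Km \<and>
     (\<forall>t v. Kp (J t v) = J t (Kp v)) \<and>
     (\<forall>t r v. J t (J r v) = J r (J t v)) \<and>
     (\<forall>v. Kp (Km v) = v \<and> Km (Kp v) = v) \<and>
     (\<forall>v. Km (Km v) = v - s (q - inverse q) (J 0 v)) \<and>
     (\<forall>t r v. Xp (Suc t) (Xp r v) - s (q ^ 2) (Xp r (Xp (Suc t) v))
              = s (q ^ 2) (Xp t (Xp (Suc r) v)) - Xp (Suc r) (Xp t v)) \<and>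
     (\<forall>t r v. Xm (Suc t) (Xm r v) - s (inverse q ^ 2) (Xm r (Xm (Suc t) v))
              = s (inverse q ^ 2) (Xm t (Xm (Suc r) v)) - Xm (Suc r) (Xm t v)) \<and>
     (\<forall>t v. Kp (Xp t (Km v)) = s (q ^ 2) (Xp t v)) \<and>
     (\<forall>t v. Kp (Xm t (Km v)) = s (inverse q ^ 2) (Xm t v)) \<and>
     (\<forall>t v. s (q ^ 2) (J 0 (Xp t v)) - s (inverse q ^ 2) (Xp t (J 0 v)) = s (qint q 2) (Xp t v)) \<and>
     (\<forall>t v. s (inverse q ^ 2) (J 0 (Xm t v)) - s (q ^ 2) (Xm t (J 0 v)) = - s (qint q 2) (Xm t v)) \<and>
     (\<forall>r t v. J (Suc r) (Xp t v) - Xp t (J (Suc r) v)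
              = s (q ^ 2) (J r (Xp (Suc t) v)) - s (inverse q ^ 2) (Xp (Suc t) (J r v))) \<and>
     (\<forall>r t v. J (Suc r) (Xm t v) - Xm t (J (Suc r) v)
              = s (inverse q ^ 2) (J r (Xm (Suc t) v)) - s (q ^ 2) (Xm (Suc t) (J r v))) \<and>
     (\<forall>t r v. Xp t (Xm r v) - Xm r (Xp t v) = Kp (J (r + t) v))"

definition uq_submodule ::
  "(complex \<Rightarrow> 'v::ab_group_add \<Rightarrow> 'v) \<Rightarrow> (nat \<Rightarrow> 'v \<Rightarrow> 'v) \<Rightarrow> (nat \<Rightarrow> 'v \<Rightarrow> 'v)
     \<Rightarrow> (nat \<Rightarrow> 'v \<Rightarrow> 'v) \<Rightarrow> ('v \<Rightarrow> 'v) \<Rightarrow> ('v \<Rightarrow> 'v) \<Rightarrow> 'v set \<Rightarrow> bool" where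
  "uq_submodule s Xp Xm J Kp Km W \<longleftrightarrow>
     module.subspace s W \<and>
     (\<forall>w\<in>W. (\<forall>t. Xp t w \<in> W \<and> Xm t w \<in> W \<and> J t w \<in> W) \<and> Kp w \<in> W \<and> Km w \<in> W)"

definition uq_simple ::
  "complex \<Rightarrow> (complex \<Rightarrow> 'v::ab_group_add \<Rightarrow> 'v) \<Rightarrow> (nat \<Rightarrow> 'v \<Rightarrow> 'v) \<Rightarrow> (nat \<Rightarrow> 'v \<Rightarrow> 'v)
     \<Rightarrow> (nat \<Rightarrow> 'v \<Rightarrow> 'v) \<Rightarrow> ('v \<Rightarrow> 'v) \<Rightarrow> ('v \<Rightarrow> 'v) \<Rightarrow> bool" where
  "uq_simple q s Xp Xm J Kp Km \<longleftrightarrow>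
     uq_rep q s Xp Xm J Kp Km \<and> (\<exists>v::'v. v \<noteq> 0) \<and>
     (\<forall>W. uq_submodule s Xp Xm J Kp Km W \<longrightarrow> W = {0} \<or> W = UNIV)"

definition highest_weight_vector ::
  "(complex \<Rightarrow> 'v::ab_group_add \<Rightarrow> 'v) \<Rightarrow> (nat \<Rightarrow> 'v \<Rightarrow> 'v) \<Rightarrow> (nat \<Rightarrow> 'v \<Rightarrow> 'v) \<Rightarrow> ('v \<Rightarrow> 'v)
     \<Rightarrow> complex \<Rightarrow> (nat \<Rightarrow> complex) \<Rightarrow> 'v \<Rightarrow> bool" where
  "highest_weight_vector s Xp J Kp lam u v0 \<longleftrightarrow>
     v0 \<noteq> 0 \<and> (\<forall>t. Xp t v0 = 0) \<and> Kp v0 = s lam v0 \<and> (\<forall>t>0. J t v0 = s (u t) v0)"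

definition Psi_plus ::
  "complex \<Rightarrow> (complex \<Rightarrow> 'v \<Rightarrow> 'v) \<Rightarrow> (nat \<Rightarrow> 'v \<Rightarrow> 'v) \<Rightarrow> ('v \<Rightarrow> 'v) \<Rightarrow> nat \<Rightarrow> 'v \<Rightarrow> 'v" where
  "Psi_plus q s J Kp t v = (if t = 0 then Kp v else s (q - inverse q) (Kp (J t v)))"

(* partitions of t: multisets of positive integers summing to t; length = size *)
definition partitions_of :: "nat \<Rightarrow> nat multiset set" where
  "partitions_of t = {lam. (\<forall>n\<in>#lam. 0 < n) \<and> sum_mset lam = t}"

(* monomial symmetric polynomial m_lam(x_1,...,x_k), variables given as a list of length k:
   sum over exponent vectors (a_1..a_k) whose nonzero entries form the multiset lam *)
definition mono_sym :: "nat multiset \<Rightarrow> complex list \<Rightarrow> complex" where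
  "mono_sym lam xs =
     (\<Sum>a \<in> {a::nat \<Rightarrow> nat. (\<forall>i\<ge>length xs. a i = 0) \<and>
                filter_mset (\<lambda>n. n \<noteq> 0) (image_mset a (mset_set {..<length xs})) = lam}.
        \<Prod>i<length xs. (xs ! i) ^ a i)"

definition p_poly :: "complex \<Rightarrow> nat \<Rightarrow> complex list \<Rightarrow> complex" where
  "p_poly q t xs =
     (\<Sum>lam \<in> {lam \<in> partitions_of t. size lam \<le> length xs}.
        inverse q ^ size lam * (q - inverse q) ^ (size lam - 1) * mono_sym lam xs)"

(* phi = beta (x - g_1)...(x - g_k) is encoded by beta and the list gs = [g_1,...,g_k] *)
definition phi_poly :: "complex \<Rightarrow> complex list \<Rightarrow> complex poly" where
  "phi_poly beta gs = smult beta (\<Prod>g\<leftarrow>gs. [:- g, 1:])"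

(* u^<0>(phi): the K^+-eigenvalue and the J_t-eigenvalues (t>0) *)
definition u0_lambda :: "complex \<Rightarrow> complex \<Rightarrow> complex list \<Rightarrow> complex" where
  "u0_lambda q beta gs = (if gs = [] then beta else beta * q ^ length gs)"

definition u0_J :: "complex \<Rightarrow> complex list \<Rightarrow> nat \<Rightarrow> complex" where
  "u0_J q gs t = (if gs = [] then 0 else p_poly q t gs)"

(* phi^flat(c w) = (1 - g_1 c w)...(1 - g_k c w) as a formal power series in w *)
definition phi_flat :: "complex list \<Rightarrow> complex \<Rightarrow> complex fps" where
  "phi_flat gs c = (\<Prod>g\<leftarrow>gs. 1 - fps_const (g * c) * fps_X)"

end

(*
  On a highest weight vector, Psi^+_t acts by lambda (q - q^-1) u_t for t > 0, so the claim is
  an identity of coefficients.  Each factor of phi^flat(q^-2 w) / phi^flat(w) expands as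
  (1 - q^-2 g w) / (1 - g w) = 1 + (1 - q^-2) (g w + g^2 w^2 + ...), hence the coefficient of
  w^t in the product is a sum over weak compositions f of t of (1 - q^-2)^#supp(f) g^f.
  Grouping compositions by their multiset of nonzero parts yields monomial symmetric
  functions, and (q - q^-1) q^-l (q - q^-1)^(l-1) = (1 - q^-2)^l turns the sum into
  (q - q^-1) p_t(q).
*)
theory Submission
  imports Defs
begin

definition weak_compositions :: "nat \<Rightarrow> nat \<Rightarrow> (nat \<Rightarrow> nat) set" where
  "weak_compositions k t = {f. (\<forall>i\<ge>k. f i = 0) \<and> (\<Sum>i<k. f i) = t}"

lemma size_eq_sum_count:
  assumes "set_mset X \<subseteq> A" "finite A"
  shows "size X = (\<Sum>i\<in>A. count X i)"
  unfolding size_multiset_overloaded_eq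
  by (rule sum.mono_neutral_left) (use assms in \<open>auto simp: not_in_iff\<close>)

lemma weak_compositions_eq_image_count:
  "weak_compositions k t = count ` multisets_of_size {..<k} t"
proof (intro set_eqI iffI)
  fix f assume f: "f \<in> weak_compositions k t"
  then have supp: "{i. 0 < f i} \<subseteq> {..<k}"
    by (auto simp: weak_compositions_def not_less[symmetric])
  then have "f \<in> {f. finite {x. 0 < f x}}" by (auto intro: finite_subset)
  then have count_Abs: "count (Abs_multiset f) = f" by (rule Abs_multiset_inverse)
  then have "set_mset (Abs_multiset f) \<subseteq> {..<k}"
    using supp by (simp add: set_mset_def)
  then have "Abs_multiset f \<in> multisets_of_size {..<k} t"
    using f by (simp add: multisets_of_size_def weak_compositions_def count_Abs size_eq_sum_count)
  with count_Abs show "f \<in> count ` multisets_of_size {..<k} t" by force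
next
  fix f assume "f \<in> count ` multisets_of_size {..<k} t"
  then obtain X where X: "set_mset X \<subseteq> {..<k}" "size X = t" and f: "f = count X"
    by (auto simp: multisets_of_size_def)
  have "\<forall>i\<ge>k. count X i = 0"
    using X(1) by (auto simp: count_eq_zero_iff)
  with X show "f \<in> weak_compositions k t"
    by (simp add: weak_compositions_def f size_eq_sum_count)
qed

lemma finite_weak_compositions: "finite (weak_compositions k t)"
  by (simp add: weak_compositions_eq_image_count finite_multisets_of_size)

lemma weak_compositions_0: "weak_compositions k 0 = {\<lambda>_. 0}"
  by (auto simp: weak_compositions_def fun_eq_iff not_less[symmetric])

lemma fps_nth_prod_lessThan:
  fixes F :: "nat \<Rightarrow> 'a::comm_semiring_1 fps"
  shows "fps_nth (\<Prod>i<k. F i) t = (\<Sum>f\<in>weak_compositions k t. \<Prod>i<k. fps_nth (F i) (f i))"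
  unfolding fps_prod_nth'[OF finite_lessThan] weak_compositions_eq_image_count
  by (simp add: sum.reindex inj_on_def count_inject)

definition linear_ratio_fps :: "'a::comm_ring_1 \<Rightarrow> 'a \<Rightarrow> 'a fps" where
  "linear_ratio_fps c x = Abs_fps (\<lambda>n. if n = 0 then 1 else (1 - c) * x ^ n)"

lemma linear_ratio_fps_mult:
  "linear_ratio_fps c x * (1 - fps_const x * fps_X) = 1 - fps_const (x * c) * fps_X"
proof (rule fps_ext)
  fix n
  show "fps_nth (linear_ratio_fps c x * (1 - fps_const x * fps_X)) n
        = fps_nth (1 - fps_const (x * c) * fps_X) n"
    by (cases n rule: nat.exhaust[case_product nat.exhaust])
       (auto simp: linear_ratio_fps_def algebra_simps fps_X_mult_nth mult.left_commute[of _ fps_X])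
qed

lemma fps_nth_prod_linear_ratio:
  "fps_nth (\<Prod>i<k. linear_ratio_fps c (x i)) t =
     (\<Sum>f\<in>weak_compositions k t. (1 - c) ^ card {i\<in>{..<k}. f i \<noteq> 0} * (\<Prod>i<k. x i ^ f i))"
proof -
  have "(\<Prod>i<k. fps_nth (linear_ratio_fps c (x i)) (f i))
        = (1 - c) ^ card {i\<in>{..<k}. f i \<noteq> 0} * (\<Prod>i<k. x i ^ f i)" for f
  proof -
    have "(\<Prod>i<k. fps_nth (linear_ratio_fps c (x i)) (f i))
          = (\<Prod>i<k. (if f i \<noteq> 0 then 1 - c else 1)) * (\<Prod>i<k. x i ^ f i)"
      by (auto simp: linear_ratio_fps_def prod.distrib[symmetric] intro!: prod.cong)
    also have "(\<Prod>i<k. (if f i \<noteq> 0 then 1 - c else 1)) = (1 - c) ^ card {i\<in>{..<k}. f i \<noteq> 0}"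
      by (simp add: prod.inter_filter[symmetric])
    finally show ?thesis .
  qed
  then show ?thesis by (simp add: fps_nth_prod_lessThan)
qed

lemma phi_flat_conv_prod_lessThan:
  "phi_flat gs c = (\<Prod>i<length gs. 1 - fps_const (gs ! i * c) * fps_X)"
  by (simp add: phi_flat_def prod.list_conv_set_nth atLeast0LessThan)

lemma phi_flat_nonzero: "phi_flat gs c \<noteq> 0"
proof -
  have "fps_nth (phi_flat gs c) 0 = 1"
    by (induction gs) (simp_all add: phi_flat_def)
  then show ?thesis by auto
qed

lemma phi_flat_eq_prod_linear_ratio_mult:
  "phi_flat gs c = (\<Prod>i<length gs. linear_ratio_fps c (gs ! i)) * phi_flat gs 1"
  by (simp add: phi_flat_conv_prod_lessThan linear_ratio_fps_mult prod.distrib[symmetric])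

lemma fps_nth_phi_flat_quotient_weak_compositions:
  "fps_nth (fps_const L * phi_flat gs c / phi_flat gs 1) t =
     L * (\<Sum>f\<in>weak_compositions (length gs) t.
            (1 - c) ^ card {i\<in>{..<length gs}. f i \<noteq> 0} * (\<Prod>i<length gs. (gs ! i) ^ f i))"
proof -
  have "fps_const L * phi_flat gs c / phi_flat gs 1
        = fps_const L * (\<Prod>i<length gs. linear_ratio_fps c (gs ! i))"
    by (subst phi_flat_eq_prod_linear_ratio_mult)
       (simp add: mult.assoc[symmetric] phi_flat_nonzero)
  then show ?thesis by (simp add: fps_nth_prod_linear_ratio)
qed

definition nonzero_parts :: "nat \<Rightarrow> (nat \<Rightarrow> nat) \<Rightarrow> nat multiset" where
  "nonzero_parts k f = filter_mset (\<lambda>n. n \<noteq> 0) (image_mset f (mset_set {..<k}))"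

lemma nonzero_parts_conv_support:
  "nonzero_parts k f = image_mset f (mset_set {i\<in>{..<k}. f i \<noteq> 0})"
  by (simp add: nonzero_parts_def image_mset_filter_mset_swap[symmetric])

lemma size_nonzero_parts: "size (nonzero_parts k f) = card {i\<in>{..<k}. f i \<noteq> 0}"
  by (simp add: nonzero_parts_conv_support)

lemma sum_mset_nonzero_parts: "sum_mset (nonzero_parts k f) = (\<Sum>i<k. f i)"
proof -
  have "sum_mset (nonzero_parts k f) = sum f {i\<in>{..<k}. f i \<noteq> 0}"
    by (simp add: nonzero_parts_conv_support sum_unfold_sum_mset)
  also have "\<dots> = (\<Sum>i<k. f i)"
    by (rule sum.mono_neutral_left) auto
  finally show ?thesis .
qed

lemma nonzero_parts_in_partitions_of:
  assumes "f \<in> weak_compositions k t"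
  shows "nonzero_parts k f \<in> {lam \<in> partitions_of t. size lam \<le> k}"
proof -
  have "\<forall>n\<in>#nonzero_parts k f. 0 < n"
    by (simp add: nonzero_parts_def)
  moreover have "sum_mset (nonzero_parts k f) = t"
    using assms by (simp add: sum_mset_nonzero_parts weak_compositions_def)
  moreover have "size (nonzero_parts k f) \<le> k"
    unfolding size_nonzero_parts by (rule card_mono[of "{..<k}", simplified]) auto
  ultimately show ?thesis
    by (simp add: partitions_of_def)
qed

lemma finite_partitions_of: "finite (partitions_of t)"
proof (rule finite_subset)
  show "partitions_of t \<subseteq> (\<Union>n\<le>t. multisets_of_size {..t} n)"
  proof
    fix lam assume lam: "lam \<in> partitions_of t"
    have "n \<le> t" if "n \<in># lam" for n
    proof -
      from that obtain N where "lam = add_mset n N"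
        by (blast dest: multi_member_split)
      with lam show ?thesis by (simp add: partitions_of_def)
    qed
    then have "lam \<in> multisets_of_size {..t} (size lam)"
      by (auto simp: multisets_of_size_def)
    moreover have "size lam \<le> t"
    proof -
      have "size lam = sum_mset (image_mset (\<lambda>_. 1) lam)"
        by (rule size_eq_sum_mset)
      also have "\<dots> \<le> sum_mset (image_mset id lam)"
        using lam by (intro sum_mset_mono) (auto simp: partitions_of_def)
      finally show ?thesis
        using lam by (simp add: partitions_of_def)
    qed
    ultimately show "lam \<in> (\<Union>n\<le>t. multisets_of_size {..t} n)"
      by blast
  qed
qed auto

lemma mono_sym_eq_sum_weak_compositions:
  assumes "lam \<in> partitions_of t"
  shows "mono_sym lam xs = (\<Sum>f | f \<in> weak_compositions (length xs) t \<and> nonzero_parts (length xs) f = lam.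
                               \<Prod>i<length xs. (xs ! i) ^ f i)"
proof -
  have "nonzero_parts (length xs) f = lam \<Longrightarrow> (\<Sum>i<length xs. f i) = t" for f
    using assms by (auto simp: partitions_of_def sum_mset_nonzero_parts[symmetric])
  then have "{f. (\<forall>i\<ge>length xs. f i = 0) \<and> nonzero_parts (length xs) f = lam}
             = {f. f \<in> weak_compositions (length xs) t \<and> nonzero_parts (length xs) f = lam}"
    by (auto simp: weak_compositions_def)
  then show ?thesis
    by (simp add: mono_sym_def nonzero_parts_def)
qed

lemma sum_partitions_mono_sym:
  "(\<Sum>lam \<in> {lam \<in> partitions_of t. size lam \<le> length xs}. h (size lam) * mono_sym lam xs) =
     (\<Sum>f\<in>weak_compositions (length xs) t.
        h (card {i\<in>{..<length xs}. f i \<noteq> 0}) * (\<Prod>i<length xs. (xs ! i) ^ f i))"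
  (is "?lhs = (\<Sum>f\<in>?W. ?g f)")
proof -
  let ?parts = "nonzero_parts (length xs)"
  have "?lhs = (\<Sum>lam \<in> {lam \<in> partitions_of t. size lam \<le> length xs}.
                  \<Sum>f | f \<in> ?W \<and> ?parts f = lam. ?g f)"
    by (intro sum.cong refl)
       (auto simp: mono_sym_eq_sum_weak_compositions sum_distrib_left size_nonzero_parts
        intro!: sum.cong)
  also have "\<dots> = (\<Sum>f\<in>?W. ?g f)"
    by (rule sum.group)
       (use nonzero_parts_in_partitions_of in \<open>auto simp: finite_weak_compositions finite_partitions_of\<close>)
  finally show ?thesis .
qed

lemma q_minus_inverse_mult_power:
  fixes q :: "'a::field"
  assumes "q \<noteq> 0" and "0 < l"
  shows "(q - inverse q) * (inverse q ^ l * (q - inverse q) ^ (l - 1)) = (1 - inverse q ^ 2) ^ l"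
proof -
  have "(q - inverse q) * (inverse q ^ l * (q - inverse q) ^ (l - 1)) = ((q - inverse q) * inverse q) ^ l"
    using assms(2) by (cases l) (simp_all add: power_mult_distrib)
  also have "(q - inverse q) * inverse q = 1 - inverse q ^ 2"
    using assms(1) by (simp add: algebra_simps power2_eq_square)
  finally show ?thesis .
qed

lemma p_poly_eq_sum_weak_compositions:
  assumes "q \<noteq> 0" and "0 < t"
  shows "(q - inverse q) * p_poly q t xs =
           (\<Sum>f\<in>weak_compositions (length xs) t.
              (1 - inverse q ^ 2) ^ card {i\<in>{..<length xs}. f i \<noteq> 0} * (\<Prod>i<length xs. (xs ! i) ^ f i))"
proof -
  have "(q - inverse q) * p_poly q t xs =
          (\<Sum>lam \<in> {lam \<in> partitions_of t. size lam \<le> length xs}.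
             (1 - inverse q ^ 2) ^ size lam * mono_sym lam xs)"
    unfolding p_poly_def sum_distrib_left
  proof (intro sum.cong refl)
    fix lam assume "lam \<in> {lam \<in> partitions_of t. size lam \<le> length xs}"
    then have "lam \<noteq> {#}"
      using assms(2) by (auto simp: partitions_of_def)
    then have "0 < size lam"
      by (simp add: nonempty_has_size)
    then show "(q - inverse q) * (inverse q ^ size lam * (q - inverse q) ^ (size lam - 1) * mono_sym lam xs)
               = (1 - inverse q ^ 2) ^ size lam * mono_sym lam xs"
      using q_minus_inverse_mult_power[OF assms(1)] by (simp add: mult.assoc[symmetric])
  qed
  also have "\<dots> = (\<Sum>f\<in>weak_compositions (length xs) t.
              (1 - inverse q ^ 2) ^ card {i\<in>{..<length xs}. f i \<noteq> 0} * (\<Prod>i<length xs. (xs ! i) ^ f i))"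
    by (rule sum_partitions_mono_sym)
  finally show ?thesis .
qed

lemma fps_nth_phi_flat_quotient_p_poly:
  assumes "q \<noteq> 0"
  shows "fps_nth (fps_const L * phi_flat gs (inverse q ^ 2) / phi_flat gs 1) t =
           L * (if t = 0 then 1 else (q - inverse q) * p_poly q t gs)"
  using p_poly_eq_sum_weak_compositions[OF assms, of t gs]
  by (simp add: fps_nth_phi_flat_quotient_weak_compositions weak_compositions_0)

lemma Psi_plus_highest_weight_vector:
  assumes "uq_rep q s Xp Xm J Kp Km" and "highest_weight_vector s Xp J Kp lam u v0"
  shows "Psi_plus q s J Kp t v0 = s (lam * (if t = 0 then 1 else (q - inverse q) * u t)) v0"
proof -
  interpret Kp: Vector_Spaces.linear s s Kp
    using assms(1) by (simp add: uq_rep_def)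
  show ?thesis
    using assms(2)
    by (simp add: Psi_plus_def highest_weight_vector_def Kp.scale Kp.vs1.scale_scale mult.commute)
qed

lemma degree_phi_poly:
  assumes "beta \<noteq> 0"
  shows "degree (phi_poly beta gs) = length gs"
proof -
  have "degree (\<Prod>g\<leftarrow>gs. [:- g, 1:]) = length gs"
  proof (induction gs)
    case (Cons g gs)
    have "degree ([:- g, 1:] * (\<Prod>g\<leftarrow>gs. [:- g, 1:])) = 1 + degree (\<Prod>g\<leftarrow>gs. [:- g, 1:])"
      by (subst degree_mult_eq) (auto simp: prod_list_zero_iff)
    with Cons.IH show ?case by simp
  qed simp
  with assms show ?thesis
    by (simp add: phi_poly_def)
qed

lemma u0_J_eq_p_poly:
  assumes "t \<noteq> 0"
  shows "u0_J q gs t = p_poly q t gs"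
proof -
  have "{lam \<in> partitions_of t. size lam \<le> length ([] :: complex list)} = {}"
    using assms by (auto simp: partitions_of_def)
  then have "p_poly q t [] = 0"
    by (simp only: p_poly_def sum.empty)
  then show ?thesis
    by (simp add: u0_J_def)
qed

theorem mainTheorem10:
  fixes q beta :: complex and gs :: "complex list"
    and s :: "complex \<Rightarrow> 'v::ab_group_add \<Rightarrow> 'v"
    and Xp Xm J :: "nat \<Rightarrow> 'v \<Rightarrow> 'v" and Kp Km :: "'v \<Rightarrow> 'v" and v0 :: 'v
  assumes q_nz: "q \<noteq> 0"
    and q_not_root: "\<forall>n>0. q ^ n \<noteq> 1"
    and beta: "beta = 1 \<or> beta = -1"
    and simple: "uq_simple q s Xp Xm J Kp Km"
    and hwv: "highest_weight_vector s Xp J Kp (u0_lambda q beta gs) (u0_J q gs) v0"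
  shows "\<forall>t. Psi_plus q s J Kp t v0 =
           s (fps_nth (fps_const (beta * q ^ degree (phi_poly beta gs))
                        * phi_flat gs (inverse q ^ 2) / phi_flat gs 1) t) v0"
proof
  fix t
  have rep: "uq_rep q s Xp Xm J Kp Km"
    using simple by (simp add: uq_simple_def)
  have deg: "degree (phi_poly beta gs) = length gs"
    using beta by (intro degree_phi_poly) auto
  have "Psi_plus q s J Kp t v0 =
          s (u0_lambda q beta gs * (if t = 0 then 1 else (q - inverse q) * u0_J q gs t)) v0"
    by (rule Psi_plus_highest_weight_vector[OF rep hwv])
  also have "\<dots> = s (fps_nth (fps_const (beta * q ^ degree (phi_poly beta gs))
                        * phi_flat gs (inverse q ^ 2) / phi_flat gs 1) t) v0"
    by (simp add: deg fps_nth_phi_flat_quotient_p_poly[OF q_nz] u0_lambda_def u0_J_eq_p_poly)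
  finally show "Psi_plus q s J Kp t v0 =
           s (fps_nth (fps_const (beta * q ^ degree (phi_poly beta gs))
                        * phi_flat gs (inverse q ^ 2) / phi_flat gs 1) t) v0" .
qed

end
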